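(* Let $L$ be a sublattice of $A_n$ of rank $n$. Then $$\Sigma^c(L)=\bigcup_{\nu\in\mathrm{Ext}^c(L)}\{x\in\mathbb R^{n+1}:x\ge\nu\}.$$
   Context: Let $n\ge 1$, $H_0=\{x\in\mathbb R^{n+1}:\sum_i x_i=0\}$ and $A_n=H_0\cap\mathbb Z^{n+1}$. For $x\in\mathbb R^{n+1}$, $\deg(x)=\sum_i x_i$. Write $x\le y$ iff $x_i\le y_i$ for all $i$. Let $\Sigma^{\mathbb R}(L)=\{x\in\mathbb R^{n+1}: x\not\le q\text{ for all }q\in L\}$ and let $\Sigma^c(L)$ be its topological closure in $\mathbb R^{n+1}$. $\mathrm{Ext}^c(L)$ is the set of points $x\in\Sigma^c(L)$ that are local minima of $\deg$ on $\Sigma^c(L)$, i.e. there is an open ball $B\ni x$ with $\deg(x)\le\deg(y)$ for all $y\in B\cap\Sigma^c(L)$. *)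

theory Defs
  imports "HOL-Analysis.Analysis"
begin

text \<open>Ambient space R^{n+1} is real^'n with CARD('n) = n+1.\<close>

definition deg :: "real^'n \<Rightarrow> real" where
  "deg x = (\<Sum>i\<in>UNIV. x $ i)"

definition cw_le :: "real^'n \<Rightarrow> real^'n \<Rightarrow> bool" where
  "cw_le x y \<longleftrightarrow> (\<forall>i. x $ i \<le> y $ i)"

definition A_lattice :: "(real^'n) set" where
  "A_lattice = {x. (\<forall>i. x $ i \<in> \<int>) \<and> deg x = 0}"

definition sublattice_of_A :: "(real^'n) set \<Rightarrow> bool" where
  "sublattice_of_A L \<longleftrightarrow> L \<subseteq> A_lattice \<and> 0 \<in> L \<and>
     (\<forall>x\<in>L. \<forall>y\<in>L. x + y \<in> L) \<and> (\<forall>x\<in>L. - x \<in> L)"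

definition lattice_rank :: "(real^'n) set \<Rightarrow> nat" where
  "lattice_rank L = dim (span L)"

definition SigmaR :: "(real^'n) set \<Rightarrow> (real^'n) set" where
  "SigmaR L = {x. \<forall>q\<in>L. \<not> cw_le x q}"

definition SigmaC :: "(real^'n) set \<Rightarrow> (real^'n) set" where
  "SigmaC L = closure (SigmaR L)"

definition ExtC :: "(real^'n) set \<Rightarrow> (real^'n) set" where
  "ExtC L = {x \<in> SigmaC L. \<exists>B. open B \<and> x \<in> B \<and>
              (\<forall>y\<in>B \<inter> SigmaC L. deg x \<le> deg y)}"

end

theory Submission
  imports Defs
begin

(*
  A point x lies in Sigma^c(L) iff for every q in L some coordinate
  satisfies q_i <= x_i; in particular Sigma^c(L) is closed upwards, which gives
  the inclusion "union of upper orthants of extreme points  <=  Sigma^c(L)".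
  Conversely fix x in Sigma^c(L) and minimise deg over the set S of points of
  Sigma^c(L) below x.  Because L has full rank in H_0 it contains, for every i,
  vectors whose coordinates off i are arbitrarily large; such vectors bound S
  from below, so S is compact and a minimiser nu exists.  Minimality of nu,
  together with the integrality of L, yields for every coordinate i a lattice
  point q with q_i = nu_i and q_j > nu_j for j <> i.  These witnesses force every
  point of Sigma^c(L) near nu to lie above nu, so nu is a local minimum of deg,
  i.e. nu is in Ext^c(L), and x >= nu.

  The argument does not use the
  hypothesis CARD('n) >= 2 of the theorem.
*)

section \<open>The closed region \<open>\<Sigma>\<^sup>c(L)\<close> for an arbitrary set \<open>L\<close>\<close>

text \<open>Taking the closure turns the strict inequalities of \<open>\<Sigma>(L)\<close> into
  non-strict ones: \<open>x \<in> \<Sigma>\<^sup>c(L)\<close> iff no \<open>q \<in> L\<close> is strictly above \<open>x\<close>.\<close>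
lemma SigmaC_eq: "SigmaC L = {x::real^'n. \<forall>q\<in>L. \<exists>i. q$i \<le> x$i}"
proof
  have "{x::real^'n. \<forall>q\<in>L. \<exists>i. q$i \<le> x$i} = (\<Inter>q\<in>L. \<Union>i. {x. q$i \<le> x$i})"
    by auto
  moreover have "closed (\<Inter>q\<in>L. \<Union>i. {x::real^'n. q$i \<le> x$i})"
    by (intro closed_INT closed_Union) (auto simp: closed_halfspace_component_ge_cart)
  ultimately have closed: "closed {x::real^'n. \<forall>q\<in>L. \<exists>i. q$i \<le> x$i}"
    by simp
  have "SigmaR L \<subseteq> {x::real^'n. \<forall>q\<in>L. \<exists>i. q$i \<le> x$i}"
    unfolding SigmaR_def cw_le_def by (auto simp: not_le intro: less_imp_le)
  then show "SigmaC L \<subseteq> {x::real^'n. \<forall>q\<in>L. \<exists>i. q$i \<le> x$i}"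
    unfolding SigmaC_def using closed closure_minimal by blast
next
  show "{x::real^'n. \<forall>q\<in>L. \<exists>i. q$i \<le> x$i} \<subseteq> SigmaC L"
  proof
    fix x :: "real^'n"
    assume x: "x \<in> {x. \<forall>q\<in>L. \<exists>i. q$i \<le> x$i}"
    define f where "f k = x + inverse (real (Suc k)) *\<^sub>R (\<chi> i. (1::real))" for k
    have "f k \<in> SigmaR L" for k
    proof -
      have "\<not> cw_le (f k) q" if "q \<in> L" for q
      proof -
        obtain i where "q$i \<le> x$i" using x \<open>q \<in> L\<close> by auto
        moreover have "x$i < f k $ i" by (simp add: f_def)
        ultimately show ?thesis unfolding cw_le_def by (meson less_le_trans not_le)
      qed
      then show ?thesis unfolding SigmaR_def by auto
    qed
    moreover have "f \<longlonglongrightarrow> x + 0 *\<^sub>R (\<chi> i. (1::real))"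
      unfolding f_def
      by (intro tendsto_add tendsto_const tendsto_scaleR LIMSEQ_inverse_real_of_nat)
    ultimately show "x \<in> SigmaC L"
      unfolding SigmaC_def closure_sequential by auto
  qed
qed

lemma SigmaC_upward:
  assumes "\<nu> \<in> SigmaC L" and "cw_le \<nu> x"
  shows "x \<in> SigmaC L"
  using assms unfolding SigmaC_eq cw_le_def by (fastforce intro: order_trans)

lemma SigmaC_forced_coordinate:
  assumes "y \<in> SigmaC L" and "q \<in> L" and "\<And>j. j \<noteq> i \<Longrightarrow> y$j < q$j"
  shows "q$i \<le> y$i"
proof -
  obtain k where k: "q$k \<le> y$k" using assms(1,2) unfolding SigmaC_eq by blast
  with assms(3) have "k = i" by (meson not_le)
  with k show ?thesis by simp
qed

text \<open>A point of \<open>\<Sigma>\<^sup>c(L)\<close> that has, for each coordinate \<open>i\<close>, a lattice point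
  agreeing with it at \<open>i\<close> and strictly above it elsewhere is extreme: on a
  neighbourhood every point of \<open>\<Sigma>\<^sup>c(L)\<close> dominates it coordinatewise.\<close>
lemma witnessed_point_in_ExtC:
  fixes \<nu> :: "real^'n"
  assumes \<nu>: "\<nu> \<in> SigmaC L"
    and witness: "\<And>i. \<exists>q\<in>L. q$i = \<nu>$i \<and> (\<forall>j. j \<noteq> i \<longrightarrow> \<nu>$j < q$j)"
  shows "\<nu> \<in> ExtC L"
proof -
  obtain qq where qq: "\<And>i. qq i \<in> L" "\<And>i. qq i $ i = \<nu>$i"
    "\<And>i j. j \<noteq> i \<Longrightarrow> \<nu>$j < qq i $ j"
    using witness by metis
  define B where "B = (\<Inter>i. \<Inter>j\<in>-{i}. {y::real^'n. y$j < qq i $ j})"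
  have "open B" unfolding B_def
    by (intro open_INT) (auto simp: open_halfspace_component_lt_cart)
  moreover have "\<nu> \<in> B" unfolding B_def using qq(3) by auto
  moreover have "deg \<nu> \<le> deg y" if y: "y \<in> B \<inter> SigmaC L" for y
  proof -
    have "\<nu>$i \<le> y$i" for i
      using SigmaC_forced_coordinate[of y L "qq i" i] y qq(1,2)
      unfolding B_def by auto
    then show ?thesis unfolding deg_def by (intro sum_mono) auto
  qed
  ultimately show ?thesis unfolding ExtC_def using \<nu> by blast
qed

section \<open>Sublattices of \<open>A\<^sub>n\<close> of full rank\<close>

lemma sublattice_nat_mult:
  assumes "sublattice_of_A L" "l \<in> L"
  shows "of_nat n *\<^sub>R l \<in> L"
proof (induction n)
  case 0
  then show ?case using assms by (simp add: sublattice_of_A_def)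
next
  case (Suc n)
  have "of_nat (Suc n) *\<^sub>R l = of_nat n *\<^sub>R l + l" by (simp add: algebra_simps)
  then show ?case using Suc assms by (simp add: sublattice_of_A_def)
qed

lemma sublattice_int_mult:
  assumes "sublattice_of_A L" "l \<in> L"
  shows "of_int k *\<^sub>R l \<in> L"
proof (cases k rule: int_cases)
  case (nonneg n)
  then show ?thesis using sublattice_nat_mult[OF assms, of n] by simp
next
  case (neg n)
  then have "of_int k *\<^sub>R l = - (of_nat (Suc n) *\<^sub>R l)"
    by (metis of_int_minus of_int_of_nat_eq scaleR_minus_left)
  then show ?thesis
    using sublattice_nat_mult[OF assms, of "Suc n"] assms(1) by (simp add: sublattice_of_A_def)
qed

lemma sublattice_sum:
  assumes "sublattice_of_A L" "finite t" "\<And>a. a \<in> t \<Longrightarrow> g a \<in> L"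
  shows "sum g t \<in> L"
  using assms(2,3)
  by (induction t rule: finite_induct) (use assms(1) in \<open>auto simp: sublattice_of_A_def\<close>)

lemma sublattice_int_combination:
  assumes "sublattice_of_A L" "finite t" "t \<subseteq> L"
  shows "(\<Sum>a\<in>t. of_int (k a) *\<^sub>R a) \<in> L"
  using assms by (intro sublattice_sum sublattice_int_mult) auto

lemma sublattice_integral:
  assumes "sublattice_of_A L" "q \<in> L"
  shows "q$i \<in> \<int>"
  using assms unfolding sublattice_of_A_def A_lattice_def by auto

lemma full_rank_span:
  fixes L :: "(real^'n) set"
  assumes "sublattice_of_A L" "lattice_rank L = CARD('n) - 1"
  shows "span L = {x. deg x = 0}"
proof -
  define H :: "(real^'n) set" where "H = {x. deg x = 0}"
  have H: "subspace H" unfolding subspace_def H_def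
    by (auto simp: deg_def sum.distrib sum_distrib_left[symmetric])
  have LH: "L \<subseteq> H" using assms(1) unfolding sublattice_of_A_def A_lattice_def H_def by auto
  have "deg (\<chi> i. 1 :: real^'n) = real CARD('n)" by (simp add: deg_def)
  then have "(\<chi> i. 1) \<notin> H" by (simp add: H_def)
  then have "span H \<subset> span (UNIV :: (real^'n) set)"
    using H by (metis UNIV_I span_UNIV span_eq_iff psubsetI subset_UNIV)
  then have "dim H < dim (UNIV :: (real^'n) set)" by (rule dim_psubset)
  then have "dim H \<le> dim L" using assms(2) by (simp add: lattice_rank_def dim_span)
  then have "span L = span H" using dim_eq_span[OF LH] by simp
  then show ?thesis using H by (simp add: span_eq_iff H_def)
qed

lemma floor_rounding_error:
  fixes c b :: real
  shows "- \<bar>b\<bar> \<le> (of_int \<lfloor>c\<rfloor> - c) * b"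
proof -
  have d: "of_int \<lfloor>c\<rfloor> - c \<le> 0" "-1 < of_int \<lfloor>c\<rfloor> - c" by linarith+
  show ?thesis
  proof (cases "b \<ge> 0")
    case True
    then have "-1 * b \<le> (of_int \<lfloor>c\<rfloor> - c) * b" using d by (intro mult_right_mono) auto
    then show ?thesis using True by simp
  next
    case False
    then have "0 * b \<le> (of_int \<lfloor>c\<rfloor> - c) * b" using d by (intro mult_right_mono_neg) auto
    then show ?thesis by simp
  qed
qed

text \<open>A full-rank sublattice contains, for each coordinate \<open>i\<close> and bound \<open>M\<close>,
  a vector all of whose other coordinates exceed \<open>M\<close>: write the degree-zero
  vector \<open>(1,\<dots>,1,-n,1,\<dots>,1)\<close> as a real combination of lattice vectors, scale it
  by a large \<open>s\<close> and round the coefficients down.\<close>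
lemma full_rank_large_vector:
  fixes L :: "(real^'n) set"
  assumes L: "sublattice_of_A L" and rank: "lattice_rank L = CARD('n) - 1"
  shows "\<exists>p\<in>L. \<forall>j. j \<noteq> i \<longrightarrow> M < p$j"
proof -
  define v :: "real^'n" where "v = (\<chi> j. if j = i then -(real CARD('n) - 1) else 1)"
  have "deg v = v$i + sum (($) v) (UNIV - {i})"
    unfolding deg_def by (simp add: sum.remove)
  also have "sum (($) v) (UNIV - {i}) = real CARD('n) - 1"
    by (simp add: v_def card_Diff_singleton of_nat_diff)
  finally have "v \<in> span L" using full_rank_span[OF L rank] by (simp add: v_def)
  then obtain t u where t: "finite t" "t \<subseteq> L" and v: "(\<Sum>a\<in>t. u a *\<^sub>R a) = v"
    by (auto simp: span_explicit)
  define C where "C = (\<Sum>a\<in>t. \<Sum>j\<in>UNIV. \<bar>a$j\<bar>)"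
  define s where "s = M + C + 1"
  define p where "p = (\<Sum>a\<in>t. of_int \<lfloor>s * u a\<rfloor> *\<^sub>R a)"
  have "M < p$j" if "j \<noteq> i" for j
  proof -
    have "s = (\<Sum>a\<in>t. s * u a * a$j)"
      using arg_cong[OF v, of "\<lambda>w. s * w$j"] that
      by (simp add: v_def sum_distrib_left mult.assoc)
    then have "p$j - s = (\<Sum>a\<in>t. (of_int \<lfloor>s * u a\<rfloor> - s * u a) * a$j)"
      by (simp add: p_def sum_subtractf algebra_simps)
    also have "\<dots> \<ge> (\<Sum>a\<in>t. - \<bar>a$j\<bar>)"
      by (intro sum_mono floor_rounding_error)
    finally have "p$j - s \<ge> - (\<Sum>a\<in>t. \<bar>a$j\<bar>)" by (simp add: sum_negf)
    moreover have "(\<Sum>a\<in>t. \<bar>a$j\<bar>) \<le> C" unfolding C_def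
      by (intro sum_mono member_le_sum) auto
    ultimately show ?thesis unfolding s_def by linarith
  qed
  moreover have "p \<in> L" unfolding p_def using sublattice_int_combination[OF L t] .
  ultimately show ?thesis by blast
qed

section \<open>Minimising the degree below a point of \<open>\<Sigma>\<^sup>c(L)\<close>\<close>

text \<open>If \<open>L\<close> contains, for every \<open>i\<close>, a point above \<open>x\<close> off coordinate \<open>i\<close>,
  then \<open>deg\<close> attains its minimum on the points of \<open>\<Sigma>\<^sup>c(L)\<close> below \<open>x\<close>:
  these points form a compact set, bounded below by the \<open>i\<close>-th coordinates
  of those lattice points.\<close>
lemma deg_minimiser_below:
  fixes x :: "real^'n"
  assumes x: "x \<in> SigmaC L"
    and large: "\<And>i. \<exists>p\<in>L. \<forall>j. j \<noteq> i \<longrightarrow> x$j < p$j"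
  obtains \<nu> where "\<nu> \<in> SigmaC L" "cw_le \<nu> x"
    "\<And>y. y \<in> SigmaC L \<Longrightarrow> cw_le y x \<Longrightarrow> deg \<nu> \<le> deg y"
proof -
  obtain pp where pp: "\<And>i. pp i \<in> L" "\<And>i j. j \<noteq> i \<Longrightarrow> x$j < pp i $ j"
    using large by metis
  define S where "S = SigmaC L \<inter> {y. cw_le y x}"
  have "S \<subseteq> cbox (\<chi> i. pp i $ i) x"
  proof
    fix y assume "y \<in> S"
    then have y: "y \<in> SigmaC L" and yx: "\<And>i. y$i \<le> x$i" unfolding S_def cw_le_def by auto
    have "pp i $ i \<le> y$i" for i
    proof (rule SigmaC_forced_coordinate[OF y pp(1)])
      fix j assume "j \<noteq> i"
      then show "y$j < pp i $ j" using yx[of j] pp(2)[of j i] by linarith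
    qed
    then show "y \<in> cbox (\<chi> i. pp i $ i) x" using yx by (simp add: mem_box_cart)
  qed
  moreover have "closed S"
  proof -
    have "{y. cw_le y x} = (\<Inter>i. {y::real^'n. y$i \<le> x$i})" unfolding cw_le_def by auto
    then have "closed {y. cw_le y x}" by (simp add: closed_INT closed_halfspace_component_le_cart)
    then show ?thesis unfolding S_def SigmaC_def by (intro closed_Int closed_closure)
  qed
  ultimately have "compact S"
    by (meson bounded_cbox bounded_subset compact_eq_bounded_closed)
  moreover have "S \<noteq> {}" using x unfolding S_def cw_le_def by auto
  moreover have "continuous_on S deg" unfolding deg_def
    by (intro continuous_intros continuous_on_component)
  ultimately obtain \<nu> where "\<nu> \<in> S" "\<And>y. y \<in> S \<Longrightarrow> deg \<nu> \<le> deg y"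
    using continuous_attains_inf[of S deg] by blast
  then show thesis using that unfolding S_def by blast
qed

text \<open>At a degree minimiser \<open>\<nu>\<close> below \<open>x\<close>, lowering coordinate \<open>i\<close> by any
  \<open>e > 0\<close> leaves \<open>\<Sigma>\<^sup>c(L)\<close>; the lattice point that excludes the lowered point
  is an approximate witness for \<open>\<nu>\<close> at \<open>i\<close>.\<close>
lemma deg_minimiser_approx_witness:
  fixes \<nu> :: "real^'n"
  assumes \<nu>: "\<nu> \<in> SigmaC L" "cw_le \<nu> x"
    and min: "\<And>y. y \<in> SigmaC L \<Longrightarrow> cw_le y x \<Longrightarrow> deg \<nu> \<le> deg y"
    and e: "e > 0"
  shows "\<exists>q\<in>L. (\<forall>j. j \<noteq> i \<longrightarrow> \<nu>$j < q$j) \<and> \<nu>$i - e < q$i \<and> q$i \<le> \<nu>$i"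
proof -
  define w :: "real^'n" where "w = \<nu> - (\<chi> j. if j = i then e else 0)"
  have "deg w = deg \<nu> - e" by (simp add: w_def deg_def sum_subtractf)
  moreover have "cw_le w x" unfolding cw_le_def
  proof
    fix k
    have "w$k \<le> \<nu>$k" using e by (simp add: w_def)
    also have "\<nu>$k \<le> x$k" using \<nu>(2) by (simp add: cw_le_def)
    finally show "w$k \<le> x$k" .
  qed
  ultimately have "w \<notin> SigmaC L" using min e by force
  then obtain q where q: "q \<in> L" and wq: "\<And>k. w$k < q$k"
    unfolding SigmaC_eq by (auto simp: not_le)
  have off_i: "\<nu>$j < q$j" if "j \<noteq> i" for j using wq[of j] that by (simp add: w_def)
  moreover have "\<nu>$i - e < q$i" using wq[of i] by (simp add: w_def)
  moreover have "q$i \<le> \<nu>$i" using SigmaC_forced_coordinate[OF \<nu>(1) q off_i] .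
  ultimately show ?thesis using q by blast
qed

text \<open>For an integral \<open>L\<close> the approximate witnesses with \<open>e = 1\<close> are exact:
  otherwise a second approximate witness would give an integer strictly between
  two consecutive ones.\<close>
lemma deg_minimiser_witness:
  fixes \<nu> :: "real^'n"
  assumes int: "\<And>q i. q \<in> L \<Longrightarrow> q$i \<in> \<int>"
    and \<nu>: "\<nu> \<in> SigmaC L" "cw_le \<nu> x"
    and min: "\<And>y. y \<in> SigmaC L \<Longrightarrow> cw_le y x \<Longrightarrow> deg \<nu> \<le> deg y"
  shows "\<exists>q\<in>L. q$i = \<nu>$i \<and> (\<forall>j. j \<noteq> i \<longrightarrow> \<nu>$j < q$j)"
proof -
  have approx: "\<exists>q\<in>L. (\<forall>j. j \<noteq> i \<longrightarrow> \<nu>$j < q$j) \<and> \<nu>$i - e < q$i \<and> q$i \<le> \<nu>$i"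
    if "e > 0" for e i
    using deg_minimiser_approx_witness[of \<nu> L x e i] \<nu> min that by blast
  obtain q where q: "q \<in> L" "\<forall>j. j \<noteq> i \<longrightarrow> \<nu>$j < q$j"
    and qi: "\<nu>$i - 1 < q$i" "q$i \<le> \<nu>$i"
    using approx[of 1 i] by auto
  have "q$i = \<nu>$i"
  proof (rule ccontr)
    assume "q$i \<noteq> \<nu>$i"
    with qi have "\<nu>$i - q$i > 0" by simp
    from approx[OF this, of i] obtain q' where q': "q' \<in> L" "q$i < q'$i" "q'$i \<le> \<nu>$i"
      by auto
    obtain m where "q$i = of_int m" using int[OF q(1)] by (auto elim: Ints_cases)
    moreover obtain m' where "q'$i = of_int m'" using int[OF q'(1)] by (auto elim: Ints_cases)
    ultimately have "m < m'" "real_of_int m' < of_int m + 1" using qi q' by auto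
    then show False by linarith
  qed
  with q show ?thesis by blast
qed

theorem mainTheorem6:
  fixes L :: "(real^'n) set"
  assumes "CARD('n) \<ge> 2"
    and "sublattice_of_A L"
    and "lattice_rank L = CARD('n) - 1"
  shows "SigmaC L = (\<Union>\<nu>\<in>ExtC L. {x. cw_le \<nu> x})"
proof
  show "(\<Union>\<nu>\<in>ExtC L. {x. cw_le \<nu> x}) \<subseteq> SigmaC L"
    using SigmaC_upward unfolding ExtC_def by blast
next
  show "SigmaC L \<subseteq> (\<Union>\<nu>\<in>ExtC L. {x. cw_le \<nu> x})"
  proof
    fix x assume x: "x \<in> SigmaC L"
    have "x$j \<le> Max (range (($) x))" for j by (simp add: Max_ge)
    then have large: "\<exists>p\<in>L. \<forall>j. j \<noteq> i \<longrightarrow> x$j < p$j" for i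
      using full_rank_large_vector[OF assms(2,3), of i "Max (range (($) x))"]
      by (meson le_less_trans)
    obtain \<nu> where \<nu>: "\<nu> \<in> SigmaC L" "cw_le \<nu> x"
      and min: "\<And>y. y \<in> SigmaC L \<Longrightarrow> cw_le y x \<Longrightarrow> deg \<nu> \<le> deg y"
      using deg_minimiser_below[OF x large] by blast
    have "\<exists>q\<in>L. q$i = \<nu>$i \<and> (\<forall>j. j \<noteq> i \<longrightarrow> \<nu>$j < q$j)" for i
      using deg_minimiser_witness[of L \<nu> x i] sublattice_integral[OF assms(2)] \<nu> min
      by blast
    then have "\<nu> \<in> ExtC L" by (rule witnessed_point_in_ExtC[OF \<nu>(1)])
    with \<nu>(2) show "x \<in> (\<Union>\<nu>\<in>ExtC L. {x. cw_le \<nu> x})" by blast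
  qed
qed

end
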